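(* (i) There is an exactly computable model — a family of binary observables $X_\epsilon\in\{-1,+1\}$ with nonzero ideal variance $v(0)>0$ and $\mathbb E[X_\epsilon]=\mu_0+\alpha\epsilon$ exactly ($\mu_0\in(-1,1)$, $\alpha\ne0$), estimated with a first-order Richardson rule with independent sampling — for which the positive crossing of the MSE difference satisfies \[ \epsilon^*(B)=\left(\frac{K_0}{\alpha^2}\right)^{1/2}B^{-1/2}+O(B^{-1}). \] (ii) There is an exactly computable deterministic-limit model — a family of binary observables $X_\epsilon\in\{-1,+1\}$ with $\mathbb E[X_\epsilon]=1-\kappa\epsilon$, $\kappa>0$, estimated with a first-order Richardson rule with scale factors $(1,a)$, $a>1$, and independent sampling — for which \[ \epsilon^*(B)=\frac{K_1}{\kappa^2}B^{-1}+O(B^{-2}). \] Thus both exponents $B^{-1/2}$ and $B^{-1}$, together with their leading constants, are attained.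
   Context: A first-order Richardson rule uses scale factors $1=\lambda_0<\lambda_1$ and coefficients $c_0,c_1$ with $c_0+c_1=1$, $c_0+c_1\lambda_1=0$ (for scales $(1,a)$: $c_0=a/(a-1)$, $c_1=-1/(a-1)$), and allocation fractions $\pi_0,\pi_1>0$ summing to $1$. With budget $B$, the unmitigated estimator is the mean of $B$ shots at noise $\epsilon$, and the ZNE estimator is $c_0\widehat\mu(\epsilon)+c_1\widehat\mu(\lambda_1\epsilon)$ with $\widehat\mu(\lambda_j\epsilon)$ the mean of $\pi_jB$ independent shots at noise $\lambda_j\epsilon$. The MSE difference is $\Delta_{\mathrm{MSE}}(\epsilon,B)=\mathrm{MSE}_{\mathrm{noisy}}-\mathrm{MSE}_{\mathrm{ZNE}}$ with $\mathrm{MSE}=\mathbb E[(\widehat\mu-\mu(0))^2]$, and $\epsilon^*(B)$ is its positive (nonzero) crossing. With $v(\epsilon)=\mathrm{Var}(X_\epsilon)$ and $v(\epsilon)=\nu\epsilon^q+\ldots$ the leading small-noise behavior, the variance-penalty constants are $K_q=\nu[\sum_jc_j^2\lambda_j^q/\pi_j-1]$; thus $K_0=v(0)[\sum_jc_j^2/\pi_j-1]$ in (i), and $K_1=2\kappa[\sum_jc_j^2\lambda_j/\pi_j-1]$ in (ii). *)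

theory Defs
  imports "HOL-Probability.Probability" "HOL-Library.Landau_Symbols"
begin

definition obs_mean :: "real pmf \<Rightarrow> real" where
  "obs_mean p = measure_pmf.expectation p (\<lambda>x. x)"

definition obs_var :: "real pmf \<Rightarrow> real" where
  "obs_var p = measure_pmf.variance p (\<lambda>x. x)"

text \<open>First-order Richardson rule with scale factors (1,a), coefficients c0 c1, allocations p0 p1.\<close>
definition richardson_rule1 :: "real \<Rightarrow> real \<Rightarrow> real \<Rightarrow> real \<Rightarrow> real \<Rightarrow> bool" where
  "richardson_rule1 a c0 c1 p0 p1 \<longleftrightarrow>
     1 < a \<and> c0 + c1 = 1 \<and> c0 + c1 * a = 0 \<and> 0 < p0 \<and> 0 < p1 \<and> p0 + p1 = 1"

definition binary_affine_model :: "(real \<Rightarrow> real pmf) \<Rightarrow> real \<Rightarrow> real \<Rightarrow> real \<Rightarrow> bool" where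
  "binary_affine_model X mu0 alpha E \<longleftrightarrow> 0 < E \<and>
     (\<forall>\<epsilon>\<in>{0..E}. set_pmf (X \<epsilon>) \<subseteq> {-1, 1} \<and> obs_mean (X \<epsilon>) = mu0 + alpha * \<epsilon>)"

text \<open>MSE of the unmitigated estimator (mean of B independent shots at noise eps), target mu(0).\<close>
definition mse_noisy :: "(real \<Rightarrow> real pmf) \<Rightarrow> real \<Rightarrow> real \<Rightarrow> real" where
  "mse_noisy X \<epsilon> B = (obs_mean (X \<epsilon>) - obs_mean (X 0))\<^sup>2 + obs_var (X \<epsilon>) / B"

text \<open>MSE of the ZNE estimator c0*muhat(eps) + c1*muhat(a*eps), with p_j*B independent shots
  at noise lambda_j*eps (bias squared plus variance).\<close>
definition mse_zne :: "(real \<Rightarrow> real pmf) \<Rightarrow> real \<Rightarrow> real \<Rightarrow> real \<Rightarrow> real \<Rightarrow> real \<Rightarrow> real \<Rightarrow> real \<Rightarrow> real" where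
  "mse_zne X a c0 c1 p0 p1 \<epsilon> B =
     (c0 * obs_mean (X \<epsilon>) + c1 * obs_mean (X (a * \<epsilon>)) - obs_mean (X 0))\<^sup>2
     + c0\<^sup>2 * obs_var (X \<epsilon>) / (p0 * B) + c1\<^sup>2 * obs_var (X (a * \<epsilon>)) / (p1 * B)"

definition delta_mse :: "(real \<Rightarrow> real pmf) \<Rightarrow> real \<Rightarrow> real \<Rightarrow> real \<Rightarrow> real \<Rightarrow> real \<Rightarrow> real \<Rightarrow> real \<Rightarrow> real" where
  "delta_mse X a c0 c1 p0 p1 \<epsilon> B = mse_noisy X \<epsilon> B - mse_zne X a c0 c1 p0 p1 \<epsilon> B"

text \<open>The positive (nonzero) crossing eps*(B) of Delta_MSE, among noise levels eps for which
  both eps and a*eps lie in the model's noise range [0,E].\<close>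
definition crossing :: "(real \<Rightarrow> real pmf) \<Rightarrow> real \<Rightarrow> real \<Rightarrow> real \<Rightarrow> real \<Rightarrow> real \<Rightarrow> real \<Rightarrow> nat \<Rightarrow> real" where
  "crossing X a c0 c1 p0 p1 E B =
     (THE \<epsilon>. 0 < \<epsilon> \<and> a * \<epsilon> \<le> E \<and> delta_mse X a c0 c1 p0 p1 \<epsilon> (real B) = 0)"

end

theory Submission
  imports Defs
begin

text \<open>For a \<open>\<plusminus>1\<close>-valued observable the variance is \<open>1 - mean\<^sup>2\<close>, so with an affine mean
  the Richardson estimator is unbiased and \<open>B \<cdot> \<Delta>MSE\<close> is the quadratic
  \<open>\<alpha>\<^sup>2 (B + P 2) \<epsilon>\<^sup>2 + 2 \<mu>0 \<alpha> P 1 \<epsilon> - (1 - \<mu>0\<^sup>2) P 0\<close> in \<open>\<epsilon>\<close>, with \<open>P q\<close> the bracket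
  of \<open>K\<^sub>q\<close>. By Cauchy-Schwarz \<open>P 0 > 0\<close>, so the constant term \<open>-K0\<close> is nonpositive and for
  large \<open>B\<close> there is exactly one positive root. When \<open>\<bar>\<mu>0\<bar> < 1\<close> it is a perturbation of the
  root \<open>sqrt (K0 / (\<alpha>\<^sup>2 B))\<close> of \<open>\<alpha>\<^sup>2 B \<epsilon>\<^sup>2 = K0\<close>, off by \<open>O(1/B)\<close>; in the deterministic limit
  \<open>\<mu>0 = 1\<close> the constant term vanishes and the root is exactly
  \<open>K1 / (\<kappa>\<^sup>2 (B + P 2)) = K1 / (\<kappa>\<^sup>2 B) + O(1/B\<^sup>2)\<close>.\<close>

text \<open>By Vieta the two roots multiply to \<open>-K/A \<le> 0\<close>, so at most one of them is positive.\<close>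
lemma quadratic_pos_root_unique:
  fixes A q K x y :: real
  assumes "0 < A" "0 \<le> K" "0 < x" "0 < y" "A * x\<^sup>2 + q * x = K" "A * y\<^sup>2 + q * y = K"
  shows "x = y"
proof (rule ccontr)
  assume "x \<noteq> y"
  moreover have "(x - y) * (A * (x + y) + q) = 0"
    using assms(5,6) by (simp add: algebra_simps power2_eq_square)
  ultimately have "q = - A * (x + y)"
    by simp
  then have "K = - A * x * y"
    using assms(5) by (simp add: power2_eq_square ring_distribs mult_ac)
  moreover have "0 < A * x * y"
    using assms(1,3,4) by simp
  ultimately show False
    using assms(2) by simp
qed

lemma quadratic_pos_root_exists:
  fixes A q K e :: real
  assumes "0 < K" "0 < e" "K \<le> A * e\<^sup>2 + q * e"
  shows "\<exists>x. 0 < x \<and> x \<le> e \<and> A * x\<^sup>2 + q * x = K"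
proof -
  have "continuous_on {0..e} (\<lambda>x. A * x\<^sup>2 + q * x)"
    by (intro continuous_intros)
  then obtain x where "0 \<le> x" "x \<le> e" "A * x\<^sup>2 + q * x = K"
    using IVT'[of "\<lambda>x. A * x\<^sup>2 + q * x" 0 K e] assms by auto
  moreover have "x \<noteq> 0"
    using \<open>A * x\<^sup>2 + q * x = K\<close> assms(1) by auto
  ultimately have "0 < x \<and> x \<le> e \<and> A * x\<^sup>2 + q * x = K"
    by auto
  then show ?thesis
    by blast
qed

lemma root_perturbation_bound:
  fixes c x s r R :: real
  assumes "0 < c" "0 \<le> x" "0 \<le> s" "c * x\<^sup>2 = c * s\<^sup>2 + r * x" "\<bar>r\<bar> \<le> R"
  shows "\<bar>x - s\<bar> \<le> R / c"
proof (cases "x + s = 0")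
  case True
  then have "x = 0" "s = 0"
    using assms(2,3) by auto
  moreover have "0 \<le> R"
    using order_trans[OF abs_ge_zero assms(5)] .
  ultimately show ?thesis
    using assms(1) by simp
next
  case False
  have "c * (x - s) * (x + s) = r * x"
    using assms(4) by (simp add: algebra_simps power2_eq_square)
  then have "c * \<bar>x - s\<bar> * (x + s) = \<bar>r\<bar> * x"
    using assms(1-3) by (metis abs_mult abs_of_nonneg abs_of_pos add_nonneg_nonneg)
  also have "\<dots> \<le> R * (x + s)"
    using assms(2,3,5) by (intro mult_mono) auto
  finally have "c * \<bar>x - s\<bar> \<le> R"
    using False assms(2,3) by (simp add: mult_le_cancel_right)
  then show ?thesis
    using assms(1) by (simp add: field_simps)
qed

lemma quadratic_root_near_sqrt:
  fixes c b d q K x E :: real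
  assumes "0 < c" "0 < b" "0 \<le> K" "0 < x" "x \<le> E" and root: "c * (b + d) * x\<^sup>2 + q * x = K"
  shows "\<bar>x - sqrt (K / c) * b powr (-1/2)\<bar> \<le> (\<bar>q\<bar> + c * \<bar>d\<bar> * E) / (c * b)"
proof -
  define s where "s = sqrt (K / c) * b powr (-1/2)"
  have "(b powr (-1/2))\<^sup>2 = 1 / b"
    unfolding power2_eq_square powr_add[symmetric] using \<open>0 < b\<close> by (simp add: powr_minus inverse_eq_divide)
  then have "c * b * s\<^sup>2 = K"
    unfolding s_def power_mult_distrib using assms(1-3) by simp
  then have perturbed: "c * b * x\<^sup>2 = c * b * s\<^sup>2 + (- q - c * d * x) * x"
    using root by (simp add: algebra_simps power2_eq_square)
  have "\<bar>- q - c * d * x\<bar> \<le> \<bar>q\<bar> + c * \<bar>d\<bar> * x"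
    using abs_triangle_ineq4[of "- q" "c * d * x"] assms(1,4) by (simp add: abs_mult)
  also have "\<dots> \<le> \<bar>q\<bar> + c * \<bar>d\<bar> * E"
    using assms(1,5) by (simp add: mult_left_mono)
  finally show ?thesis
    unfolding s_def[symmetric] using assms(1-4)
    by (intro root_perturbation_bound[OF _ _ _ perturbed]) (simp_all add: s_def)
qed

lemma bigoI_real_threshold:
  fixes f g :: "nat \<Rightarrow> real"
  assumes "\<And>n. N \<le> real n \<Longrightarrow> \<bar>f n\<bar> \<le> C * \<bar>g n\<bar>"
  shows "f \<in> O(g)"
proof (rule bigoI)
  have "N \<le> real n" if "nat \<lceil>N\<rceil> \<le> n" for n
    using that real_nat_ceiling_ge[of N] by linarith
  then show "\<forall>\<^sub>F n in at_top. norm (f n) \<le> C * norm (g n)"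
    unfolding eventually_at_top_linorder using assms by (intro exI[of _ "nat \<lceil>N\<rceil>"]) auto
qed

lemma obs_var_binary:
  assumes "set_pmf p \<subseteq> {-1, 1}"
  shows "obs_var p = 1 - (obs_mean p)\<^sup>2"
proof -
  have integrable: "integrable (measure_pmf p) f" for f :: "real \<Rightarrow> real"
    by (rule integrable_measure_pmf_finite) (use assms finite_subset in blast)
  have "measure_pmf.expectation p (\<lambda>x. x\<^sup>2) = measure_pmf.expectation p (\<lambda>_. 1)"
    using assms by (intro integral_cong_AE) (auto simp: AE_measure_pmf_iff)
  then show ?thesis
    unfolding obs_var_def obs_mean_def by (simp add: measure_pmf.variance_eq integrable)
qed

definition binary_pmf :: "real \<Rightarrow> real pmf" where
  "binary_pmf m = map_pmf (\<lambda>b. if b then 1 else -1) (bernoulli_pmf ((1 + m) / 2))"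

lemma set_binary_pmf: "set_pmf (binary_pmf m) \<subseteq> {-1, 1}"
  unfolding binary_pmf_def by auto

lemma obs_mean_binary_pmf:
  assumes "\<bar>m\<bar> \<le> 1"
  shows "obs_mean (binary_pmf m) = m"
  using assms unfolding obs_mean_def binary_pmf_def by (simp add: field_simps)

lemma obs_var_binary_pmf:
  assumes "\<bar>m\<bar> \<le> 1"
  shows "obs_var (binary_pmf m) = 1 - m\<^sup>2"
  using assms by (simp add: obs_var_binary set_binary_pmf obs_mean_binary_pmf)

lemma binary_affine_model_binary_pmf:
  assumes "0 < E" and "\<And>t. t \<in> {0..E} \<Longrightarrow> \<bar>mu0 + alpha * t\<bar> \<le> 1"
  shows "binary_affine_model (\<lambda>t. binary_pmf (mu0 + alpha * t)) mu0 alpha E"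
  using assms unfolding binary_affine_model_def by (simp add: set_binary_pmf obs_mean_binary_pmf)

lemma binary_affine_model_exists_interior:
  assumes "\<bar>mu0\<bar> < 1"
  shows "\<exists>X E. binary_affine_model X mu0 alpha E \<and> 0 < obs_var (X 0)"
proof -
  define E where "E = (1 - \<bar>mu0\<bar>) / (\<bar>alpha\<bar> + 1)"
  have "\<bar>mu0 + alpha * t\<bar> \<le> 1" if "t \<in> {0..E}" for t
  proof -
    have "\<bar>alpha * t\<bar> = \<bar>alpha\<bar> * t"
      using that by (simp add: abs_mult)
    also have "\<dots> \<le> (\<bar>alpha\<bar> + 1) * E"
      using that by (intro mult_mono) auto
    also have "\<dots> = 1 - \<bar>mu0\<bar>"
      unfolding E_def by simp
    finally show ?thesis
      by linarith
  qed
  moreover have "0 < E"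
    unfolding E_def using assms by simp
  ultimately have "binary_affine_model (\<lambda>t. binary_pmf (mu0 + alpha * t)) mu0 alpha E"
    by (intro binary_affine_model_binary_pmf)
  moreover have "0 < obs_var ((\<lambda>t. binary_pmf (mu0 + alpha * t)) 0)"
    using assms by (simp add: obs_var_binary_pmf abs_square_less_1)
  ultimately show ?thesis
    by blast
qed

lemma binary_affine_model_exists_from_one:
  assumes "0 < \<kappa>"
  shows "\<exists>X E. binary_affine_model X 1 (- \<kappa>) E"
proof -
  have "\<bar>1 + - \<kappa> * t\<bar> \<le> 1" if "t \<in> {0..1 / \<kappa>}" for t
  proof -
    have "\<kappa> * t \<le> 1"
      using that assms by (simp add: pos_le_divide_eq mult.commute)
    moreover have "0 \<le> \<kappa> * t"
      using that assms by simp
    ultimately show ?thesis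
      by simp
  qed
  then have "binary_affine_model (\<lambda>t. binary_pmf (1 + - \<kappa> * t)) 1 (- \<kappa>) (1 / \<kappa>)"
    using assms by (intro binary_affine_model_binary_pmf) simp_all
  then show ?thesis
    by blast
qed

lemma
  assumes "binary_affine_model X mu0 alpha E" and "t \<in> {0..E}"
  shows obs_mean_binary_affine: "obs_mean (X t) = mu0 + alpha * t"
    and obs_var_binary_affine: "obs_var (X t) = 1 - (mu0 + alpha * t)\<^sup>2"
  using assms obs_var_binary unfolding binary_affine_model_def by auto

definition variance_penalty :: "real \<Rightarrow> real \<Rightarrow> real \<Rightarrow> real \<Rightarrow> real \<Rightarrow> nat \<Rightarrow> real" where
  "variance_penalty a c0 c1 p0 p1 q = c0\<^sup>2 / p0 + c1\<^sup>2 * a ^ q / p1 - 1"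

text \<open>Cauchy-Schwarz: \<open>(c0\<^sup>2/p0 + c1\<^sup>2/p1)(p0 + p1) \<ge> (c0 - c1)\<^sup>2\<close>, and \<open>c0 - c1 = 1 - 2 c1 > 1\<close>.\<close>
lemma variance_penalty_pos:
  assumes "richardson_rule1 a c0 c1 p0 p1"
  shows "0 < variance_penalty a c0 c1 p0 p1 0"
proof -
  from assms have a: "1 < a" and c: "c0 + c1 = 1" "c0 + c1 * a = 0"
    and p: "0 < p0" "0 < p1" "p0 + p1 = 1"
    unfolding richardson_rule1_def by auto
  have "c1 * (a - 1) = -1"
    using c by (simp add: algebra_simps)
  then have "c1 < 0"
    using a by (smt (verit) mult_nonneg_nonneg)
  then have "1 < (c0 - c1)\<^sup>2"
    using c by (smt (verit) one_less_power zero_less_numeral)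
  moreover have "(c0\<^sup>2 / p0 + c1\<^sup>2 / p1) * (p0 + p1) - (c0 - c1)\<^sup>2 = (c0 * p1 + c1 * p0)\<^sup>2 / (p0 * p1)"
    using p(1,2) by (simp add: field_simps power2_eq_square)
  moreover have "0 \<le> (c0 * p1 + c1 * p0)\<^sup>2 / (p0 * p1)"
    using p by simp
  ultimately show ?thesis
    unfolding variance_penalty_def p(3) by simp
qed

lemma variance_penalty_mono:
  assumes "richardson_rule1 a c0 c1 p0 p1" and "q \<le> r"
  shows "variance_penalty a c0 c1 p0 p1 q \<le> variance_penalty a c0 c1 p0 p1 r"
proof -
  from assms(1) have "1 < a" "0 < p1"
    unfolding richardson_rule1_def by auto
  then have "c1\<^sup>2 * a ^ q / p1 \<le> c1\<^sup>2 * a ^ r / p1"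
    using assms(2) by (intro divide_right_mono mult_left_mono power_increasing) auto
  then show ?thesis
    unfolding variance_penalty_def by simp
qed

lemma richardson_rule1_exact_affine:
  assumes "richardson_rule1 a c0 c1 p0 p1"
  shows "c0 * (m + alpha * \<epsilon>) + c1 * (m + alpha * (a * \<epsilon>)) = m"
proof -
  have "c0 * (m + alpha * \<epsilon>) + c1 * (m + alpha * (a * \<epsilon>)) = (c0 + c1) * m + alpha * \<epsilon> * (c0 + c1 * a)"
    by (simp add: algebra_simps)
  then show ?thesis
    using assms unfolding richardson_rule1_def by simp
qed

lemma delta_mse_binary_affine:
  assumes model: "binary_affine_model X mu0 alpha E" and rule: "richardson_rule1 a c0 c1 p0 p1"
    and "0 \<le> \<epsilon>" "a * \<epsilon> \<le> E" "B \<noteq> 0"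
  defines "P \<equiv> variance_penalty a c0 c1 p0 p1"
  shows "B * delta_mse X a c0 c1 p0 p1 \<epsilon> B
    = alpha\<^sup>2 * (B + P 2) * \<epsilon>\<^sup>2 + 2 * mu0 * alpha * P 1 * \<epsilon> - (1 - mu0\<^sup>2) * P 0"
proof -
  from rule have "1 < a" "0 < p0" "0 < p1"
    unfolding richardson_rule1_def by auto
  moreover have "\<epsilon> \<le> a * \<epsilon>"
    using \<open>1 < a\<close> \<open>0 \<le> \<epsilon>\<close> by (simp add: mult_le_cancel_right1)
  ultimately have range: "0 \<in> {0..E}" "\<epsilon> \<in> {0..E}" "a * \<epsilon> \<in> {0..E}"
    using assms(3,4) by auto
  note mean = obs_mean_binary_affine[OF model] and var = obs_var_binary_affine[OF model]
  have delta: "delta_mse X a c0 c1 p0 p1 \<epsilon> B = alpha\<^sup>2 * \<epsilon>\<^sup>2 + (1 - (mu0 + alpha * \<epsilon>)\<^sup>2) / B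
     - c0\<^sup>2 * (1 - (mu0 + alpha * \<epsilon>)\<^sup>2) / (p0 * B) - c1\<^sup>2 * (1 - (mu0 + alpha * (a * \<epsilon>))\<^sup>2) / (p1 * B)"
    unfolding delta_mse_def mse_noisy_def mse_zne_def mean[OF range(1)] mean[OF range(2)]
      mean[OF range(3)] var[OF range(2)] var[OF range(3)] richardson_rule1_exact_affine[OF rule]
    by (simp add: power_mult_distrib)
  show ?thesis
    unfolding delta P_def variance_penalty_def using \<open>B \<noteq> 0\<close> \<open>0 < p0\<close> \<open>0 < p1\<close>
    by (simp add: field_simps power2_eq_square)
qed

lemma crossing_binary_affine_eqI:
  assumes model: "binary_affine_model X mu0 alpha E" and rule: "richardson_rule1 a c0 c1 p0 p1"
    and "alpha \<noteq> 0" "0 < B"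
  defines "P \<equiv> variance_penalty a c0 c1 p0 p1"
  assumes "0 < real B + P 2" "0 < x" "a * x \<le> E"
    and root: "alpha\<^sup>2 * (B + P 2) * x\<^sup>2 + 2 * mu0 * alpha * P 1 * x = (1 - mu0\<^sup>2) * P 0"
  shows "crossing X a c0 c1 p0 p1 E B = x"
  unfolding crossing_def
proof (rule the_equality)
  have "0 < E"
    using model unfolding binary_affine_model_def by simp
  moreover have "0 \<le> obs_var (X 0)"
    unfolding obs_var_def by (rule measure_pmf.variance_positive)
  ultimately have "0 \<le> 1 - mu0\<^sup>2"
    using obs_var_binary_affine[OF model, of 0] by simp
  then have K: "0 \<le> (1 - mu0\<^sup>2) * P 0"
    using variance_penalty_pos[OF rule] unfolding P_def by simp
  have A: "0 < alpha\<^sup>2 * (B + P 2)"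
    using assms(3,6) by simp
  have delta_zero_iff: "delta_mse X a c0 c1 p0 p1 y B = 0
      \<longleftrightarrow> alpha\<^sup>2 * (B + P 2) * y\<^sup>2 + 2 * mu0 * alpha * P 1 * y = (1 - mu0\<^sup>2) * P 0"
    if "0 \<le> y" "a * y \<le> E" for y
    using delta_mse_binary_affine[OF model rule that, of "real B"] \<open>0 < B\<close>
    unfolding P_def by auto
  show "0 < x \<and> a * x \<le> E \<and> delta_mse X a c0 c1 p0 p1 x B = 0"
    using assms(7,8) root delta_zero_iff by simp
  fix y
  assume "0 < y \<and> a * y \<le> E \<and> delta_mse X a c0 c1 p0 p1 y B = 0"
  then show "y = x"
    using quadratic_pos_root_unique[OF A K _ \<open>0 < x\<close> _ root] delta_zero_iff by auto
qed

lemma crossing_binary_affine_root: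
  assumes model: "binary_affine_model X mu0 alpha E" and rule: "richardson_rule1 a c0 c1 p0 p1"
    and alpha: "alpha \<noteq> 0" and "0 < B"
  defines "P \<equiv> variance_penalty a c0 c1 p0 p1"
  assumes K0: "0 < (1 - mu0\<^sup>2) * P 0"
    and large: "\<bar>2 * mu0 * alpha * P 1\<bar> * (E / a) + (1 - mu0\<^sup>2) * P 0 \<le> alpha\<^sup>2 * (B + P 2) * (E / a)\<^sup>2"
  obtains x where "0 < x" "x \<le> E" "crossing X a c0 c1 p0 p1 E B = x"
    and "alpha\<^sup>2 * (B + P 2) * x\<^sup>2 + 2 * mu0 * alpha * P 1 * x = (1 - mu0\<^sup>2) * P 0"
proof -
  define q where "q = 2 * mu0 * alpha * P 1"
  define e where "e = E / a"
  have "1 < a"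
    using rule unfolding richardson_rule1_def by simp
  moreover have "0 < E"
    using model unfolding binary_affine_model_def by simp
  ultimately have "0 < e"
    unfolding e_def by simp
  have large: "\<bar>q\<bar> * e + (1 - mu0\<^sup>2) * P 0 \<le> alpha\<^sup>2 * (B + P 2) * e\<^sup>2"
    using large unfolding q_def e_def .
  moreover have "0 \<le> \<bar>q\<bar> * e"
    using \<open>0 < e\<close> by simp
  ultimately have "0 < alpha\<^sup>2 * (B + P 2) * e\<^sup>2"
    using K0 by linarith
  then have "0 < B + P 2"
    by (simp add: zero_less_mult_iff)
  have "- q * e \<le> \<bar>q\<bar> * e"
    using \<open>0 < e\<close> by (intro mult_right_mono) auto
  then have "(1 - mu0\<^sup>2) * P 0 \<le> alpha\<^sup>2 * (B + P 2) * e\<^sup>2 + q * e"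
    using large by linarith
  then obtain x where x: "0 < x" "x \<le> e"
    and root: "alpha\<^sup>2 * (B + P 2) * x\<^sup>2 + q * x = (1 - mu0\<^sup>2) * P 0"
    using quadratic_pos_root_exists[OF K0 \<open>0 < e\<close>] by blast
  have "a * x \<le> a * e"
    using x \<open>1 < a\<close> by simp
  then have "a * x \<le> E"
    unfolding e_def using \<open>1 < a\<close> by simp
  moreover have "x \<le> a * x"
    using x \<open>1 < a\<close> by simp
  ultimately have "x \<le> E"
    by linarith
  moreover have "crossing X a c0 c1 p0 p1 E B = x"
    using crossing_binary_affine_eqI[OF model rule alpha \<open>0 < B\<close>] \<open>0 < B + P 2\<close> x \<open>a * x \<le> E\<close> root
    unfolding P_def q_def by simp
  ultimately show ?thesis
    using that x root unfolding q_def by blast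
qed

lemma crossing_sqrt_law:
  assumes mu0: "\<bar>mu0\<bar> < 1" and alpha: "alpha \<noteq> 0"
    and rule: "richardson_rule1 a c0 c1 p0 p1" and model: "binary_affine_model X mu0 alpha E"
  defines "K0 \<equiv> obs_var (X 0) * variance_penalty a c0 c1 p0 p1 0"
  shows "(\<lambda>B. crossing X a c0 c1 p0 p1 E B - sqrt (K0 / alpha\<^sup>2) * real B powr (-1/2))
    \<in> O(\<lambda>B. 1 / real B)"
proof -
  define P where "P = variance_penalty a c0 c1 p0 p1"
  define q where "q = 2 * mu0 * alpha * P 1"
  define e where "e = E / a"
  define N where "N = \<bar>P 2\<bar> + (\<bar>q\<bar> * e + K0) / (alpha\<^sup>2 * e\<^sup>2) + 1"
  define C where "C = (\<bar>q\<bar> + alpha\<^sup>2 * \<bar>P 2\<bar> * E) / alpha\<^sup>2"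
  have "0 < E"
    using model unfolding binary_affine_model_def by simp
  moreover have "1 < a"
    using rule unfolding richardson_rule1_def by simp
  ultimately have "0 < e"
    unfolding e_def by simp
  have K0: "K0 = (1 - mu0\<^sup>2) * P 0"
    unfolding K0_def P_def using obs_var_binary_affine[OF model, of 0] \<open>0 < E\<close> by simp
  then have "0 < K0"
    using mu0 variance_penalty_pos[OF rule] unfolding P_def by (simp add: abs_square_less_1)
  have "\<bar>crossing X a c0 c1 p0 p1 E B - sqrt (K0 / alpha\<^sup>2) * real B powr (-1/2)\<bar>
      \<le> C * \<bar>1 / real B\<bar>" if "N \<le> real B" for B
  proof -
    define b where "b = real B"
    have "0 \<le> (\<bar>q\<bar> * e + K0) / (alpha\<^sup>2 * e\<^sup>2)"
      using \<open>0 < e\<close> \<open>0 < K0\<close> by simp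
    then have "0 < b" and "(\<bar>q\<bar> * e + K0) / (alpha\<^sup>2 * e\<^sup>2) \<le> b + P 2"
      using that unfolding N_def b_def by linarith+
    then have "\<bar>q\<bar> * e + K0 \<le> alpha\<^sup>2 * (b + P 2) * e\<^sup>2"
      using alpha \<open>0 < e\<close> by (simp add: pos_divide_le_eq mult_ac)
    then obtain x where x: "0 < x" "x \<le> E" and crossing: "crossing X a c0 c1 p0 p1 E B = x"
      and root: "alpha\<^sup>2 * (b + P 2) * x\<^sup>2 + q * x = K0"
      using crossing_binary_affine_root[OF model rule alpha] \<open>0 < b\<close> \<open>0 < K0\<close>
      unfolding K0 P_def q_def e_def b_def by auto
    have "\<bar>x - sqrt (K0 / alpha\<^sup>2) * b powr (-1/2)\<bar> \<le> (\<bar>q\<bar> + alpha\<^sup>2 * \<bar>P 2\<bar> * E) / (alpha\<^sup>2 * b)"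
      using alpha \<open>0 < b\<close> \<open>0 < K0\<close> x root by (intro quadratic_root_near_sqrt) auto
    then show ?thesis
      unfolding crossing b_def[symmetric] C_def using \<open>0 < b\<close> by (simp add: field_simps)
  qed
  then show ?thesis
    by (rule bigoI_real_threshold)
qed

lemma crossing_deterministic_limit:
  assumes "0 < \<kappa>" and rule: "richardson_rule1 a c0 c1 p0 p1"
    and model: "binary_affine_model X 1 (- \<kappa>) E" and "0 < B"
  defines "P \<equiv> variance_penalty a c0 c1 p0 p1"
  defines "K1 \<equiv> 2 * \<kappa> * P 1"
  assumes large: "K1 * a \<le> \<kappa>\<^sup>2 * E * (B + P 2)"
  shows "crossing X a c0 c1 p0 p1 E B = K1 / (\<kappa>\<^sup>2 * (B + P 2))"
proof -
  have "1 < a"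
    using rule unfolding richardson_rule1_def by simp
  moreover have "0 < K1"
    using \<open>0 < \<kappa>\<close> variance_penalty_pos[OF rule] variance_penalty_mono[OF rule, of 0 1]
    unfolding K1_def P_def by simp
  ultimately have "0 < K1 * a"
    by simp
  then have "0 < \<kappa>\<^sup>2 * E * (B + P 2)"
    using large by linarith
  moreover have "0 < \<kappa>\<^sup>2 * E"
    using model \<open>0 < \<kappa>\<close> unfolding binary_affine_model_def by simp
  ultimately have "0 < B + P 2"
    by (rule zero_less_mult_pos)
  define x where "x = K1 / (\<kappa>\<^sup>2 * (B + P 2))"
  have "0 < x"
    unfolding x_def using \<open>0 < K1\<close> \<open>0 < \<kappa>\<close> \<open>0 < B + P 2\<close> by simp
  have "a * x \<le> E"
    using large \<open>0 < \<kappa>\<close> \<open>0 < B + P 2\<close> unfolding x_def by (simp add: pos_divide_le_eq mult_ac)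
  have "\<kappa>\<^sup>2 * (B + P 2) * x = K1"
    unfolding x_def using \<open>0 < \<kappa>\<close> \<open>0 < B + P 2\<close> by simp
  moreover have "(- \<kappa>)\<^sup>2 * (B + P 2) * x\<^sup>2 + 2 * 1 * (- \<kappa>) * P 1 * x = x * (\<kappa>\<^sup>2 * (B + P 2) * x - K1)"
    unfolding K1_def by (simp add: power2_eq_square algebra_simps)
  ultimately have "(- \<kappa>)\<^sup>2 * (B + P 2) * x\<^sup>2 + 2 * 1 * (- \<kappa>) * P 1 * x = (1 - 1\<^sup>2) * P 0"
    by simp
  then have "crossing X a c0 c1 p0 p1 E B = x"
    using \<open>0 < \<kappa>\<close> \<open>0 < B\<close> \<open>0 < B + P 2\<close> \<open>0 < x\<close> \<open>a * x \<le> E\<close>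
    unfolding P_def by (intro crossing_binary_affine_eqI[OF model rule]) simp_all
  then show ?thesis
    unfolding x_def .
qed

lemma crossing_inverse_law:
  assumes "0 < \<kappa>" and rule: "richardson_rule1 a c0 c1 p0 p1"
    and model: "binary_affine_model X 1 (- \<kappa>) E"
  defines "K1 \<equiv> 2 * \<kappa> * variance_penalty a c0 c1 p0 p1 1"
  shows "(\<lambda>B. crossing X a c0 c1 p0 p1 E B - K1 / \<kappa>\<^sup>2 * real B powr (-1))
    \<in> O(\<lambda>B. 1 / (real B)\<^sup>2)"
proof -
  define P where "P = variance_penalty a c0 c1 p0 p1"
  define N where "N = 2 * \<bar>P 2\<bar> + K1 * a / (\<kappa>\<^sup>2 * E) + 1"
  define C where "C = 2 * K1 * \<bar>P 2\<bar> / \<kappa>\<^sup>2"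
  have "0 < E"
    using model unfolding binary_affine_model_def by simp
  have "0 < K1"
    using \<open>0 < \<kappa>\<close> variance_penalty_pos[OF rule] variance_penalty_mono[OF rule, of 0 1]
    unfolding K1_def by simp
  moreover have "1 < a"
    using rule unfolding richardson_rule1_def by simp
  ultimately have "0 < K1 * a / (\<kappa>\<^sup>2 * E)"
    using \<open>0 < \<kappa>\<close> \<open>0 < E\<close> by simp
  have "\<bar>crossing X a c0 c1 p0 p1 E B - K1 / \<kappa>\<^sup>2 * real B powr (-1)\<bar> \<le> C * \<bar>1 / (real B)\<^sup>2\<bar>"
    if "N \<le> real B" for B
  proof -
    define b where "b = real B"
    have "0 < b" and "K1 * a / (\<kappa>\<^sup>2 * E) \<le> b + P 2" and "b / 2 \<le> b + P 2"
      using that \<open>0 < K1 * a / (\<kappa>\<^sup>2 * E)\<close> unfolding N_def b_def by linarith+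
    then have "0 < b + P 2" and "K1 * a \<le> \<kappa>\<^sup>2 * E * (b + P 2)"
      using \<open>0 < K1 * a / (\<kappa>\<^sup>2 * E)\<close> \<open>0 < \<kappa>\<close> \<open>0 < E\<close> by (simp_all add: pos_divide_le_eq mult_ac)
    then have crossing: "crossing X a c0 c1 p0 p1 E B = K1 / (\<kappa>\<^sup>2 * (b + P 2))"
      using crossing_deterministic_limit[OF \<open>0 < \<kappa>\<close> rule model] \<open>0 < b\<close>
      unfolding K1_def P_def b_def by simp
    have "K1 / (\<kappa>\<^sup>2 * (b + P 2)) - K1 / \<kappa>\<^sup>2 * b powr (-1) = K1 / \<kappa>\<^sup>2 * (1 / (b + P 2) - 1 / b)"
      using \<open>0 < b\<close> by (simp add: powr_minus inverse_eq_divide right_diff_distrib)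
    also have "1 / (b + P 2) - 1 / b = - P 2 / (b * (b + P 2))"
      using \<open>0 < b\<close> \<open>0 < b + P 2\<close> by (simp add: field_simps)
    finally have "\<bar>K1 / (\<kappa>\<^sup>2 * (b + P 2)) - K1 / \<kappa>\<^sup>2 * b powr (-1)\<bar>
        = K1 * \<bar>P 2\<bar> / (\<kappa>\<^sup>2 * b * (b + P 2))"
      using \<open>0 < K1\<close> \<open>0 < b\<close> \<open>0 < b + P 2\<close> by (simp add: abs_mult abs_divide)
    also have "\<dots> \<le> K1 * \<bar>P 2\<bar> / (\<kappa>\<^sup>2 * b * (b / 2))"
      using \<open>0 < K1\<close> \<open>0 < \<kappa>\<close> \<open>0 < b\<close> \<open>b / 2 \<le> b + P 2\<close>
      by (intro divide_left_mono mult_left_mono mult_pos_pos) auto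
    also have "\<dots> = C * \<bar>1 / b\<^sup>2\<bar>"
      unfolding C_def using \<open>0 < b\<close> by (simp add: field_simps power2_eq_square)
    finally show ?thesis
      unfolding crossing b_def .
  qed
  then show ?thesis
    by (rule bigoI_real_threshold)
qed

theorem proposition11:
  shows
  "(\<forall>mu0 alpha a c0 c1 p0 p1.
      -1 < mu0 \<and> mu0 < 1 \<and> alpha \<noteq> 0 \<and> richardson_rule1 a c0 c1 p0 p1 \<longrightarrow>
        (\<exists>X E. binary_affine_model X mu0 alpha E \<and> obs_var (X 0) > 0) \<and>
        (\<forall>X E. binary_affine_model X mu0 alpha E \<longrightarrow>
           (let K0 = obs_var (X 0) * (c0\<^sup>2 / p0 + c1\<^sup>2 / p1 - 1) in
            (\<lambda>B. crossing X a c0 c1 p0 p1 E B - sqrt (K0 / alpha\<^sup>2) * real B powr (-1/2))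
              \<in> O(\<lambda>B. 1 / real B))))
   \<and>
   (\<forall>\<kappa> a c0 c1 p0 p1.
      0 < \<kappa> \<and> richardson_rule1 a c0 c1 p0 p1 \<longrightarrow>
        (\<exists>X E. binary_affine_model X 1 (-\<kappa>) E) \<and>
        (\<forall>X E. binary_affine_model X 1 (-\<kappa>) E \<longrightarrow>
           (let K1 = 2 * \<kappa> * (c0\<^sup>2 * 1 / p0 + c1\<^sup>2 * a / p1 - 1) in
            (\<lambda>B. crossing X a c0 c1 p0 p1 E B - K1 / \<kappa>\<^sup>2 * real B powr (-1))
              \<in> O(\<lambda>B. 1 / (real B)\<^sup>2))))"
  unfolding Let_def
proof (intro conjI allI impI)
  fix mu0 alpha a c0 c1 p0 p1 :: real
  assume hyps: "-1 < mu0 \<and> mu0 < 1 \<and> alpha \<noteq> 0 \<and> richardson_rule1 a c0 c1 p0 p1"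
  then have mu0: "\<bar>mu0\<bar> < 1"
    by auto
  then show "\<exists>X E. binary_affine_model X mu0 alpha E \<and> 0 < obs_var (X 0)"
    by (rule binary_affine_model_exists_interior)
  fix X E
  assume "binary_affine_model X mu0 alpha E"
  then show "(\<lambda>B. crossing X a c0 c1 p0 p1 E B
      - sqrt (obs_var (X 0) * (c0\<^sup>2 / p0 + c1\<^sup>2 / p1 - 1) / alpha\<^sup>2) * real B powr (-1/2))
    \<in> O(\<lambda>B. 1 / real B)"
    using crossing_sqrt_law[OF mu0] hyps by (simp add: variance_penalty_def)
next
  fix \<kappa> a c0 c1 p0 p1 :: real
  assume hyps: "0 < \<kappa> \<and> richardson_rule1 a c0 c1 p0 p1"
  then show "\<exists>X E. binary_affine_model X 1 (- \<kappa>) E"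
    by (simp add: binary_affine_model_exists_from_one)
  fix X E
  assume "binary_affine_model X 1 (- \<kappa>) E"
  then show "(\<lambda>B. crossing X a c0 c1 p0 p1 E B
      - 2 * \<kappa> * (c0\<^sup>2 * 1 / p0 + c1\<^sup>2 * a / p1 - 1) / \<kappa>\<^sup>2 * real B powr (-1))
    \<in> O(\<lambda>B. 1 / (real B)\<^sup>2)"
    using crossing_inverse_law hyps by (simp add: variance_penalty_def)
qed

end
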